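(* Let $X$ be an ultrahomogeneous linear order, let $\Gamma$ be the group of all automorphisms of $X$ acting by application, and let $I$ be the ideal of nowhere dense subsets of $X$ (in the order topology). Then $\Gamma\curvearrowright X, I$ is a simple dynamical ideal.
   Context: A linear order is ultrahomogeneous if every order-isomorphism between finite subsets extends to an automorphism. For a group $\Gamma$ acting on $X$ and $a\subseteq X$, $\mathrm{pstab}(a)=\{\gamma\in\Gamma:\gamma\cdot x=x\ \forall x\in a\}$. A dynamical ideal $\Gamma\curvearrowright X, I$ (a $\Gamma$-invariant ideal containing all singletons) is simple if for all $a\subseteq b$ in $I$, the only normal subgroup of $\mathrm{pstab}(a)$ containing $\mathrm{pstab}(b)$ is $\mathrm{pstab}(a)$ itself. *)

theory Defs
  imports "HOL-Analysis.Analysis" "HOL-Algebra.Group_Action"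
begin

definition nowhere_dense :: "'a::topological_space set \<Rightarrow> bool" where
  "nowhere_dense A \<longleftrightarrow> interior (closure A) = {}"

definition order_aut_group :: "('a::linorder \<Rightarrow> 'a) monoid" where
  "order_aut_group = \<lparr>carrier = {f. bij f \<and> strict_mono f}, mult = (\<circ>), one = id\<rparr>"

definition ultrahomogeneous :: "'a::linorder itself \<Rightarrow> bool" where
  "ultrahomogeneous (TYPE('a)) \<longleftrightarrow>
     (\<forall>(A::'a set) (h::'a \<Rightarrow> 'a). finite A \<and> strict_mono_on A h \<longrightarrow>
        (\<exists>f \<in> carrier (order_aut_group :: ('a \<Rightarrow> 'a) monoid). \<forall>x\<in>A. f x = h x))"

definition set_ideal :: "'x set \<Rightarrow> 'x set set \<Rightarrow> bool" where
  "set_ideal X I \<longleftrightarrow> I \<subseteq> Pow X \<and> {} \<in> I \<and>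
     (\<forall>A B. A \<in> I \<and> B \<subseteq> A \<longrightarrow> B \<in> I) \<and>
     (\<forall>A B. A \<in> I \<and> B \<in> I \<longrightarrow> A \<union> B \<in> I)"

definition dynamical_ideal ::
  "('g, 'b) monoid_scheme \<Rightarrow> 'x set \<Rightarrow> ('g \<Rightarrow> 'x \<Rightarrow> 'x) \<Rightarrow> 'x set set \<Rightarrow> bool" where
  "dynamical_ideal G X act I \<longleftrightarrow>
     group_action G X act \<and> set_ideal X I \<and>
     (\<forall>g \<in> carrier G. \<forall>A \<in> I. act g ` A \<in> I) \<and>
     (\<forall>x \<in> X. {x} \<in> I)"

definition pstab :: "('g, 'b) monoid_scheme \<Rightarrow> ('g \<Rightarrow> 'x \<Rightarrow> 'x) \<Rightarrow> 'x set \<Rightarrow> 'g set" where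
  "pstab G act a = {g \<in> carrier G. \<forall>x \<in> a. act g x = x}"

definition simple_dynamical_ideal ::
  "('g, 'b) monoid_scheme \<Rightarrow> 'x set \<Rightarrow> ('g \<Rightarrow> 'x \<Rightarrow> 'x) \<Rightarrow> 'x set set \<Rightarrow> bool" where
  "simple_dynamical_ideal G X act I \<longleftrightarrow>
     dynamical_ideal G X act I \<and>
     (\<forall>a b. a \<in> I \<and> b \<in> I \<and> a \<subseteq> b \<longrightarrow>
        (\<forall>N. normal N (G\<lparr>carrier := pstab G act a\<rparr>) \<and> pstab G act b \<subseteq> N
             \<longrightarrow> N = pstab G act a))"

end

theory Submission
  imports Defs
begin

text \<open>An ultrahomogeneous order with two points is dense without endpoints, so a set is nowhere
  dense iff every open interval contains an open subinterval missing it; in this form the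
  ideal is visibly invariant under automorphisms.

  For simplicity of the ideal, let \<open>a \<subseteq> b\<close> be nowhere dense and \<open>N\<close> normal in \<open>fixing a\<close> with
  \<open>fixing b \<subseteq> N\<close>. If \<open>f \<in> fixing a\<close> is supported in the middle parts \<open>(c i, d i)\<close> of pairwise
  disjoint intervals \<open>(m i, m' i)\<close> avoiding \<open>a\<close>, ultrahomogeneity and nowhere density of \<open>b\<close>
  give \<open>k \<in> fixing a\<close> moving \<open>b\<close> out of every \<open>(c i, d i)\<close>; then \<open>k\<inverse> f k \<in> fixing b \<subseteq> N\<close>,
  so \<open>f \<in> N\<close>. Every element of \<open>fixing a\<close> is a product \<open>u \<circ> v\<inverse>\<close> of automorphisms moving points
  only upwards, and such a \<open>g\<close> acts on the convex hull of each of its orbits like a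
  translation. Choosing a representative \<open>x0\<close> per orbit, one builds \<open>g_even\<close> agreeing with \<open>g\<close>
  on a window inside each even fundamental domain \<open>(g\<^sup>2\<^sup>j x0, g\<^sup>2\<^sup>j\<^sup>+\<^sup>2 x0)\<close> and supported there;
  then \<open>g \<circ> g_even\<inverse>\<close> is supported in the odd fundamental domains, and both factors lie in \<open>N\<close>
  by the first step.\<close>

subsection \<open>The automorphism group of a linear order\<close>

definition order_auts :: "('a::linorder \<Rightarrow> 'a) set" where
  "order_auts = {f. bij f \<and> strict_mono f}"

text \<open>\<open>inv\<close> alone denotes the group inverse of HOL-Algebra here.\<close>

abbreviation fun_inv :: "('a \<Rightarrow> 'b) \<Rightarrow> 'b \<Rightarrow> 'a" where
  "fun_inv f \<equiv> inv_into UNIV f"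

lemma carrier_order_aut_group [simp]: "carrier order_aut_group = order_auts"
  by (simp add: order_aut_group_def order_auts_def)

lemma mult_order_aut_group [simp]: "f \<otimes>\<^bsub>order_aut_group\<^esub> g = f \<circ> g"
  by (simp add: order_aut_group_def)

lemma one_order_aut_group [simp]: "\<one>\<^bsub>order_aut_group\<^esub> = id"
  by (simp add: order_aut_group_def)

lemma order_autsI: "strict_mono f \<Longrightarrow> surj f \<Longrightarrow> f \<in> order_auts"
  by (simp add: order_auts_def bij_def strict_mono_imp_inj_on)

lemma inv_in_order_auts: "f \<in> order_auts \<Longrightarrow> fun_inv f \<in> order_auts"
  by (auto simp: order_auts_def bij_imp_bij_inv bij_is_inj bij_is_surj
      intro: strict_mono_inv[of f])

lemma comp_in_order_auts: "f \<in> order_auts \<Longrightarrow> g \<in> order_auts \<Longrightarrow> f \<circ> g \<in> order_auts"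
  by (auto simp: order_auts_def bij_comp strict_mono_def)

lemma id_in_order_auts: "id \<in> order_auts"
  by (auto simp: order_auts_def strict_mono_def)

lemma order_auts_less_iff [simp]: "f \<in> order_auts \<Longrightarrow> f x < f y \<longleftrightarrow> x < y"
  by (simp add: order_auts_def strict_mono_less)

lemma order_auts_le_iff [simp]: "f \<in> order_auts \<Longrightarrow> f x \<le> f y \<longleftrightarrow> x \<le> y"
  by (simp add: order_auts_def strict_mono_less_eq)

lemma order_auts_inv_apply [simp]: "f \<in> order_auts \<Longrightarrow> fun_inv f (f x) = x"
  by (simp add: order_auts_def bij_is_inj)

lemma order_auts_apply_inv [simp]: "f \<in> order_auts \<Longrightarrow> f (fun_inv f x) = x"
  by (simp add: order_auts_def bij_is_surj surj_f_inv_f)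

lemma le_order_auts_apply_iff: "f \<in> order_auts \<Longrightarrow> u \<le> f x \<longleftrightarrow> fun_inv f u \<le> x"
  using order_auts_le_iff[of f "fun_inv f u" x] by simp

lemma order_auts_apply_le_iff: "f \<in> order_auts \<Longrightarrow> f x \<le> u \<longleftrightarrow> x \<le> fun_inv f u"
  using order_auts_le_iff[of f x "fun_inv f u"] by simp

lemma group_order_aut_group: "group (order_aut_group :: ('a::linorder \<Rightarrow> 'a) monoid)"
proof (rule groupI)
  fix f :: "'a \<Rightarrow> 'a"
  assume "f \<in> carrier order_aut_group"
  then show "\<exists>f'\<in>carrier order_aut_group. f' \<otimes>\<^bsub>order_aut_group\<^esub> f = \<one>\<^bsub>order_aut_group\<^esub>"
    by (intro bexI[of _ "fun_inv f"]) (auto simp: inv_in_order_auts fun_eq_iff)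
qed (auto simp: comp_in_order_auts id_in_order_auts comp_assoc)

lemma m_inv_order_aut_group [simp]:
  "f \<in> order_auts \<Longrightarrow> inv\<^bsub>order_aut_group\<^esub> f = fun_inv f"
  by (rule group.inv_equality[OF group_order_aut_group]) (auto simp: inv_in_order_auts fun_eq_iff)

lemma group_action_order_aut_group:
  "group_action (order_aut_group :: ('a::linorder \<Rightarrow> 'a) monoid) UNIV (\<lambda>f x. f x)"
  unfolding group_action_def group_hom_def group_hom_axioms_def
proof (intro conjI group_order_aut_group group_BijGroup)
  show "(\<lambda>f x. f x) \<in> hom order_aut_group (BijGroup (UNIV::'a set))"
    by (auto simp: hom_def BijGroup_def Bij_def order_auts_def compose_def fun_eq_iff)
qed

abbreviation fixing :: "'a::linorder set \<Rightarrow> ('a \<Rightarrow> 'a) set" where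
  "fixing A \<equiv> {f \<in> order_auts. \<forall>x\<in>A. f x = x}"

lemma pstab_order_aut_group: "pstab order_aut_group (\<lambda>f x. f x) A = fixing A"
  by (simp add: pstab_def)

lemma inv_in_fixing: "f \<in> fixing A \<Longrightarrow> fun_inv f \<in> fixing A"
  by (simp add: inv_in_order_auts) (metis order_auts_inv_apply)

lemma subgroup_fixing: "subgroup (fixing A) order_aut_group"
proof (rule group.subgroupI[OF group_order_aut_group])
  show "fixing A \<noteq> {}" using id_in_order_auts by auto
next
  fix f assume "f \<in> fixing A"
  then show "inv\<^bsub>order_aut_group\<^esub> f \<in> fixing A"
    using inv_in_fixing[of f A] m_inv_order_aut_group[of f] by auto
qed (auto simp: comp_in_order_auts)

subsection \<open>Consequences of ultrahomogeneity\<close>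

lemma ultrahomogeneous_extend:
  assumes "ultrahomogeneous TYPE('a::linorder)" "finite A" "strict_mono_on A h"
  shows "\<exists>f\<in>order_auts. \<forall>x\<in>A. f x = (h x :: 'a)"
  using assms by (auto simp: ultrahomogeneous_def)

lemma ultrahomogeneous_transitive:
  assumes "ultrahomogeneous TYPE('a::linorder)"
  shows "\<exists>f\<in>order_auts. f x = (y::'a)"
  using ultrahomogeneous_extend[OF assms, of "{x}" "\<lambda>_. y"] by (auto simp: strict_mono_on_def)

lemma ultrahomogeneous_pair:
  assumes "ultrahomogeneous TYPE('a::linorder)" "x1 < x2" "y1 < (y2::'a)"
  shows "\<exists>f\<in>order_auts. f x1 = y1 \<and> f x2 = y2"
proof -
  have "\<exists>f\<in>order_auts. \<forall>x\<in>{x1, x2}. f x = (if x = x1 then y1 else y2)"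
    by (rule ultrahomogeneous_extend[OF assms(1)]) (use assms in \<open>auto simp: strict_mono_on_def\<close>)
  then show ?thesis using assms by auto
qed

lemma ultrahomogeneous_quadruple:
  assumes "ultrahomogeneous TYPE('a::linorder)" "x1 < x2" "x2 < x3" "x3 < x4"
    "y1 < y2" "y2 < y3" "y3 < (y4::'a)"
  shows "\<exists>f\<in>order_auts. f x1 = y1 \<and> f x2 = y2 \<and> f x3 = y3 \<and> f x4 = y4"
proof -
  let ?h = "\<lambda>z. if z = x1 then y1 else if z = x2 then y2 else if z = x3 then y3 else y4"
  have "\<exists>f\<in>order_auts. \<forall>x\<in>{x1, x2, x3, x4}. f x = ?h x"
    by (rule ultrahomogeneous_extend[OF assms(1)]) (use assms in \<open>auto simp: strict_mono_on_def\<close>)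
  then obtain f where "f \<in> order_auts" "\<forall>x\<in>{x1, x2, x3, x4}. f x = ?h x" by blast
  then show ?thesis using assms by (intro bexI[of _ f]) auto
qed

lemma ultrahomogeneous_gt_ex:
  assumes "ultrahomogeneous TYPE('a::linorder)" "\<exists>x y :: 'a. x \<noteq> y"
  shows "\<exists>y. (x::'a) < y"
proof -
  obtain p q :: 'a where "p < q" using assms(2) by (metis linorder_neqE)
  moreover obtain f where "f \<in> order_auts" "f p = x"
    using ultrahomogeneous_transitive[OF assms(1)] by blast
  ultimately show ?thesis by (intro exI[of _ "f q"]) auto
qed

lemma ultrahomogeneous_lt_ex:
  assumes "ultrahomogeneous TYPE('a::linorder)" "\<exists>x y :: 'a. x \<noteq> y"
  shows "\<exists>y. y < (x::'a)"
proof -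
  obtain p q :: 'a where "p < q" using assms(2) by (metis linorder_neqE)
  moreover obtain f where "f \<in> order_auts" "f q = x"
    using ultrahomogeneous_transitive[OF assms(1)] by blast
  ultimately show ?thesis by (intro exI[of _ "f p"]) auto
qed

lemma ultrahomogeneous_dense:
  assumes "ultrahomogeneous TYPE('a::linorder)" "\<exists>x y :: 'a. x \<noteq> y" "x < (y::'a)"
  shows "\<exists>z. x < z \<and> z < y"
proof -
  obtain p q :: 'a where "p < q" using assms(2) by (metis linorder_neqE)
  moreover obtain r where "q < r" using ultrahomogeneous_gt_ex[OF assms(1,2)] by blast
  moreover obtain f where "f \<in> order_auts" "f p = x" "f r = y"
    using ultrahomogeneous_pair[OF assms(1) _ assms(3), of p r] \<open>p < q\<close> \<open>q < r\<close> by force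
  ultimately show ?thesis by (intro exI[of _ "f q"]) auto
qed

subsection \<open>Nowhere dense sets of a dense linear order\<close>

definition interval_nowhere_dense :: "'a::linorder set \<Rightarrow> bool" where
  "interval_nowhere_dense A \<longleftrightarrow>
     (\<forall>u v. u < v \<longrightarrow> (\<exists>u' v'. u \<le> u' \<and> u' < v' \<and> v' \<le> v \<and> {u'<..<v'} \<inter> A = {}))"

lemma interval_nowhere_denseD:
  "interval_nowhere_dense A \<Longrightarrow> u < v \<Longrightarrow>
     \<exists>u' v'. u \<le> u' \<and> u' < v' \<and> v' \<le> v \<and> {u'<..<v'} \<inter> A = {}"
  by (simp add: interval_nowhere_dense_def)

lemma interval_nowhere_dense_if_nowhere_dense:
  fixes A :: "'a::linorder_topology set"
  assumes dense: "\<And>x y::'a. x < y \<Longrightarrow> \<exists>z. x < z \<and> z < y"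
    and nd: "nowhere_dense A"
  shows "interval_nowhere_dense A"
  unfolding interval_nowhere_dense_def
proof (intro allI impI)
  fix u v :: 'a assume "u < v"
  have "\<not> {u<..<v} \<subseteq> closure A"
  proof
    assume "{u<..<v} \<subseteq> closure A"
    then have "{u<..<v} \<subseteq> interior (closure A)" by (simp add: interior_maximal)
    then show False using nd dense[OF \<open>u < v\<close>] by (auto simp: nowhere_dense_def)
  qed
  then obtain y where y: "y \<in> {u<..<v}" "y \<notin> closure A" by blast
  define T where "T = {u<..<v} - closure A"
  have "open T" "y \<in> T" using y by (simp_all add: T_def open_Diff)
  then obtain p q where p: "p < y" "{p<..y} \<subseteq> T" and q: "y < q" "{y..<q} \<subseteq> T"
    using open_left[of T y u] open_right[of T y v] y by auto
  have "{p<..<q} \<subseteq> T"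
  proof
    fix x assume "x \<in> {p<..<q}"
    then show "x \<in> T" using p q by (cases "x \<le> y") auto
  qed
  then have "{max u p<..<min v q} \<inter> A = {}"
    using closure_subset[of A] by (auto simp: T_def)
  then show "\<exists>u' v'. u \<le> u' \<and> u' < v' \<and> v' \<le> v \<and> {u'<..<v'} \<inter> A = {}"
    using p q y by (intro exI[of _ "max u p"] exI[of _ "min v q"]) auto
qed

lemma nowhere_dense_if_interval_nowhere_dense:
  fixes A :: "'a::linorder_topology set"
  assumes dense: "\<And>x y::'a. x < y \<Longrightarrow> \<exists>z. x < z \<and> z < y"
    and gt: "\<And>x::'a. \<exists>y. x < y" and lt: "\<And>x::'a. \<exists>y. y < x"
    and ind: "interval_nowhere_dense A"
  shows "nowhere_dense A"
  unfolding nowhere_dense_def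
proof (rule ccontr)
  assume "interior (closure A) \<noteq> {}"
  then obtain y where "y \<in> interior (closure A)" by blast
  then obtain T where T: "open T" "y \<in> T" "T \<subseteq> closure A" by (rule interiorE)
  obtain y1 y2 where "y1 < y" "y < y2" using lt gt by blast
  then obtain p q where p: "p < y" "{p<..y} \<subseteq> T" and q: "y < q" "{y..<q} \<subseteq> T"
    using open_left[OF T(1,2)] open_right[OF T(1,2)] by metis
  have pq: "{p<..<q} \<subseteq> closure A"
  proof
    fix x assume "x \<in> {p<..<q}"
    then have "x \<in> T" using p q by (cases "x \<le> y") auto
    then show "x \<in> closure A" using T(3) by blast
  qed
  have "p < q" using p q by simp
  then obtain u v where uv: "p \<le> u" "u < v" "v \<le> q" "{u<..<v} \<inter> A = {}"
    using interval_nowhere_denseD[OF ind] by blast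
  then have "{u<..<v} \<inter> closure A = {}"
    using open_Int_closure_eq_empty[of "{u<..<v}" A] by simp
  moreover obtain z where "u < z" "z < v" using dense[OF uv(2)] by blast
  moreover have "z \<in> {p<..<q}" using uv \<open>u < z\<close> \<open>z < v\<close> by (meson greaterThanLessThan_iff le_less_trans less_le_trans)
  then have "z \<in> closure A" using pq by blast
  ultimately show False by auto
qed

lemma dynamical_ideal_interval_nowhere_dense:
  "dynamical_ideal (order_aut_group :: ('a::linorder \<Rightarrow> 'a) monoid) UNIV (\<lambda>f x. f x)
     {A. interval_nowhere_dense A}"
  unfolding dynamical_ideal_def set_ideal_def
proof (intro conjI allI impI ballI group_action_order_aut_group)
  show "{} \<in> {A :: 'a set. interval_nowhere_dense A}"
    by (auto simp: interval_nowhere_dense_def)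
next
  fix A B :: "'a set"
  assume "A \<in> {A. interval_nowhere_dense A} \<and> B \<subseteq> A"
  then show "B \<in> {A. interval_nowhere_dense A}"
    unfolding interval_nowhere_dense_def by blast
next
  fix A B :: "'a set"
  assume "A \<in> {A. interval_nowhere_dense A} \<and> B \<in> {A. interval_nowhere_dense A}"
  then have A: "interval_nowhere_dense A" and B: "interval_nowhere_dense B" by auto
  show "A \<union> B \<in> {A. interval_nowhere_dense A}"
    unfolding mem_Collect_eq interval_nowhere_dense_def
  proof (intro allI impI)
    fix u v :: 'a assume "u < v"
    obtain u1 v1 where 1: "u \<le> u1" "u1 < v1" "v1 \<le> v" "{u1<..<v1} \<inter> A = {}"
      using interval_nowhere_denseD[OF A \<open>u < v\<close>] by blast
    obtain u2 v2 where 2: "u1 \<le> u2" "u2 < v2" "v2 \<le> v1" "{u2<..<v2} \<inter> B = {}"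
      using interval_nowhere_denseD[OF B \<open>u1 < v1\<close>] by blast
    have "{u2<..<v2} \<subseteq> {u1<..<v1}" using 1 2 by auto
    then have "{u2<..<v2} \<inter> (A \<union> B) = {}" using 1(4) 2(4) by blast
    then show "\<exists>u' v'. u \<le> u' \<and> u' < v' \<and> v' \<le> v \<and> {u'<..<v'} \<inter> (A \<union> B) = {}"
      using 1 2 by (intro exI[of _ u2] exI[of _ v2]) auto
  qed
next
  fix f :: "'a \<Rightarrow> 'a" and A :: "'a set"
  assume "f \<in> carrier order_aut_group" and "A \<in> {A. interval_nowhere_dense A}"
  then have f: "f \<in> order_auts" and A: "interval_nowhere_dense A" by auto
  show "(\<lambda>x. f x) ` A \<in> {A. interval_nowhere_dense A}"
    unfolding mem_Collect_eq interval_nowhere_dense_def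
  proof (intro allI impI)
    fix u v :: 'a assume "u < v"
    then have "fun_inv f u < fun_inv f v" using inv_in_order_auts[OF f] by simp
    then obtain u1 v1 where 1: "fun_inv f u \<le> u1" "u1 < v1" "v1 \<le> fun_inv f v" "{u1<..<v1} \<inter> A = {}"
      using interval_nowhere_denseD[OF A] by blast
    have "{f u1<..<f v1} \<inter> f ` A = {}" using 1(4) f by auto
    then show "\<exists>u' v'. u \<le> u' \<and> u' < v' \<and> v' \<le> v \<and> {u'<..<v'} \<inter> (\<lambda>x. f x) ` A = {}"
      using 1 f by (intro exI[of _ "f u1"] exI[of _ "f v1"])
        (simp add: le_order_auts_apply_iff order_auts_apply_le_iff)
  qed
next
  fix x :: 'a
  show "{x} \<in> {A. interval_nowhere_dense A}"
    unfolding mem_Collect_eq interval_nowhere_dense_def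
  proof (intro allI impI)
    fix u v :: 'a assume "u < v"
    show "\<exists>u' v'. u \<le> u' \<and> u' < v' \<and> v' \<le> v \<and> {u'<..<v'} \<inter> {x} = {}"
    proof (cases "u < x \<and> x < v")
      case True
      then show ?thesis by (intro exI[of _ u] exI[of _ x]) auto
    next
      case False
      then show ?thesis using \<open>u < v\<close> by (intro exI[of _ u] exI[of _ v]) auto
    qed
  qed
qed simp

subsection \<open>Gluing automorphisms\<close>

definition paste :: "'a::linorder \<Rightarrow> ('a \<Rightarrow> 'a) \<Rightarrow> ('a \<Rightarrow> 'a) \<Rightarrow> 'a \<Rightarrow> 'a" where
  "paste p f1 f2 x = (if x \<le> p then f1 x else f2 x)"

lemma paste_in_order_auts:
  assumes "f1 \<in> order_auts" "f2 \<in> order_auts" "f1 p = f2 p"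
  shows "paste p f1 f2 \<in> order_auts"
proof (rule order_autsI)
  show "strict_mono (paste p f1 f2)"
  proof (rule strict_monoI)
    fix x y :: 'a assume "x < y"
    show "paste p f1 f2 x < paste p f1 f2 y"
    proof (cases "x \<le> p \<and> \<not> y \<le> p")
      case True
      then have "f1 x \<le> f1 p" using assms(1) by simp
      also have "\<dots> = f2 p" by fact
      also have "\<dots> < f2 y" using True assms(2) by (simp add: not_le)
      finally show ?thesis using True by (simp add: paste_def)
    next
      case False
      then show ?thesis using \<open>x < y\<close> assms by (auto simp: paste_def)
    qed
  qed
  show "surj (paste p f1 f2)"
  proof (rule surjI)
    fix y
    show "paste p f1 f2 (if y \<le> f1 p then fun_inv f1 y else fun_inv f2 y) = y"
      using assms le_order_auts_apply_iff[OF assms(1), of y p]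
        le_order_auts_apply_iff[OF assms(2), of y p]
      by (auto simp: paste_def)
  qed
qed

definition order_convex :: "'a::linorder set \<Rightarrow> bool" where
  "order_convex S \<longleftrightarrow> (\<forall>x\<in>S. \<forall>y\<in>S. \<forall>z. x \<le> z \<and> z \<le> y \<longrightarrow> z \<in> S)"

lemma order_convex_singleton: "order_convex {x}"
  by (auto simp: order_convex_def)

lemma order_convex_greaterThanLessThan: "order_convex {a<..<b}"
  by (auto simp: order_convex_def)

lemma order_convex_disjoint_less:
  fixes P Q :: "'a::linorder set"
  assumes "order_convex P" "order_convex Q" "P \<inter> Q = {}"
    and "x \<in> P" "y \<in> Q" "x < y" "p \<in> P" "q \<in> Q"
  shows "p < q"
proof (rule ccontr)
  assume "\<not> p < q"
  then have "q \<le> p" by simp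
  consider "y \<le> p" | "x \<le> q" | "q < x" "p < y" by fastforce
  then show False
  proof cases
    case 1
    then have "y \<in> P" using assms unfolding order_convex_def by (meson less_imp_le)
    then show False using assms by blast
  next
    case 2
    then have "q \<in> P" using assms \<open>q \<le> p\<close> unfolding order_convex_def by blast
    then show False using assms by blast
  next
    case 3
    then have "x \<in> Q" using assms unfolding order_convex_def by (meson less_imp_le)
    then show False using assms by blast
  qed
qed

definition patch :: "'i set \<Rightarrow> ('i \<Rightarrow> 'a set) \<Rightarrow> ('i \<Rightarrow> 'a \<Rightarrow> 'a) \<Rightarrow> 'a \<Rightarrow> 'a" where
  "patch I C F x = (if \<exists>i\<in>I. x \<in> C i then F (SOME i. i \<in> I \<and> x \<in> C i) x else x)"

lemma patch_eq:
  assumes "\<And>i j. i \<in> I \<Longrightarrow> j \<in> I \<Longrightarrow> i \<noteq> j \<Longrightarrow> C i \<inter> C j = {}"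
    and "i \<in> I" "x \<in> C i"
  shows "patch I C F x = F i x"
proof -
  have "(SOME i. i \<in> I \<and> x \<in> C i) = i"
    using assms by (intro some_equality) blast+
  then show ?thesis using assms by (auto simp: patch_def)
qed

lemma patch_outside: "(\<And>i. i \<in> I \<Longrightarrow> x \<notin> C i) \<Longrightarrow> patch I C F x = x"
  by (auto simp: patch_def)

lemma patch_in_order_auts:
  fixes C :: "'i \<Rightarrow> 'a::linorder set"
  assumes disj: "\<And>i j. i \<in> I \<Longrightarrow> j \<in> I \<Longrightarrow> i \<noteq> j \<Longrightarrow> C i \<inter> C j = {}"
    and convex: "\<And>i. i \<in> I \<Longrightarrow> order_convex (C i)"
    and onto: "\<And>i. i \<in> I \<Longrightarrow> F i ` C i = C i"
    and mono: "\<And>i. i \<in> I \<Longrightarrow> strict_mono_on (C i) (F i)"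
  shows "patch I C F \<in> order_auts"
proof (rule order_autsI)
  let ?g = "patch I C F"
  have piece: "\<exists>P. order_convex P \<and> x \<in> P \<and> ?g x \<in> P \<and>
      (\<forall>z\<in>P. z \<noteq> x \<longrightarrow> (\<exists>i\<in>I. x \<in> C i \<and> z \<in> C i))" for x
  proof (cases "\<exists>i\<in>I. x \<in> C i")
    case True
    then obtain i where "i \<in> I" "x \<in> C i" by blast
    moreover have "?g x = F i x" using patch_eq[where I=I and C=C, OF disj \<open>i \<in> I\<close> \<open>x \<in> C i\<close>] .
    moreover have "F i x \<in> C i" using onto[OF \<open>i \<in> I\<close>] \<open>x \<in> C i\<close> by (metis imageI)
    ultimately show ?thesis using convex by (intro exI[of _ "C i"]) auto
  next
    case False
    then show ?thesis
      using patch_outside[of I x C F] order_convex_singleton by (intro exI[of _ "{x}"]) auto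
  qed
  show "strict_mono ?g"
  proof (rule strict_monoI)
    fix x y :: 'a assume "x < y"
    show "?g x < ?g y"
    proof (cases "\<exists>i\<in>I. x \<in> C i \<and> y \<in> C i")
      case True
      then obtain i where "i \<in> I" "x \<in> C i" "y \<in> C i" by blast
      then show ?thesis
        using mono[of i] patch_eq[where I=I and C=C, OF disj] \<open>x < y\<close> by (simp add: strict_mono_on_def)
    next
      case False
      obtain P where P: "order_convex P" "x \<in> P" "?g x \<in> P"
          "\<forall>z\<in>P. z \<noteq> x \<longrightarrow> (\<exists>i\<in>I. x \<in> C i \<and> z \<in> C i)"
        using piece[of x] by blast
      obtain Q where Q: "order_convex Q" "y \<in> Q" "?g y \<in> Q"
          "\<forall>z\<in>Q. z \<noteq> y \<longrightarrow> (\<exists>i\<in>I. y \<in> C i \<and> z \<in> C i)"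
        using piece[of y] by blast
      have "x \<noteq> y" using \<open>x < y\<close> by simp
      have "P \<inter> Q = {}"
      proof (rule ccontr)
        assume "P \<inter> Q \<noteq> {}"
        then obtain z where "z \<in> P" "z \<in> Q" by blast
        consider "z = x" | "z = y" | "z \<noteq> x" "z \<noteq> y" by blast
        then show False
        proof cases
          case 1
          then have "x \<in> Q" using \<open>z \<in> Q\<close> by simp
          then show False using Q(4) \<open>x \<noteq> y\<close> False by blast
        next
          case 2
          then have "y \<in> P" using \<open>z \<in> P\<close> by simp
          then show False using P(4) \<open>x \<noteq> y\<close> False by metis
        next
          case 3
          then obtain i j where "i \<in> I" "x \<in> C i" "z \<in> C i" "j \<in> I" "y \<in> C j" "z \<in> C j"
            using P(4) Q(4) \<open>z \<in> P\<close> \<open>z \<in> Q\<close> by blast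
          then show False using disj[of i j] False by blast
        qed
      qed
      from order_convex_disjoint_less[OF P(1) Q(1) this P(2) Q(2) \<open>x < y\<close> P(3) Q(3)]
      show ?thesis .
    qed
  qed
  show "surj ?g"
  proof -
    have "y \<in> range ?g" for y
    proof (cases "\<exists>i\<in>I. y \<in> C i")
      case True
      then obtain i where "i \<in> I" "y \<in> C i" by blast
      then have "y \<in> F i ` C i" using onto by simp
      then obtain x where "x \<in> C i" "F i x = y" by blast
      then have "?g x = y"
        using patch_eq[where I=I and C=C and F=F, OF disj \<open>i \<in> I\<close>] by simp
      then show ?thesis using rangeI[of ?g x] by simp
    next
      case False
      then have "?g y = y" by (intro patch_outside) blast
      then show ?thesis using rangeI[of ?g y] by simp
    qed
    then show ?thesis by blast
  qed
qed

lemma order_auts_fixing_endpoints: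
  assumes "f \<in> order_auts" "f p = p" "f q = q"
  shows "f ` {p<..<q} = {p<..<q}" "strict_mono_on {p<..<q} f"
proof -
  show "strict_mono_on {p<..<q} f" using assms by (simp add: strict_mono_on_def)
  show "f ` {p<..<q} = {p<..<q}"
  proof
    show "f ` {p<..<q} \<subseteq> {p<..<q}"
      using assms order_auts_less_iff[OF assms(1), of p] order_auts_less_iff[OF assms(1), of _ q]
      by auto
    show "{p<..<q} \<subseteq> f ` {p<..<q}"
    proof
      fix y assume "y \<in> {p<..<q}"
      then have "fun_inv f y \<in> {p<..<q}"
        using assms order_auts_less_iff[OF assms(1), of p "fun_inv f y"]
          order_auts_less_iff[OF assms(1), of "fun_inv f y" q] by simp
      then show "y \<in> f ` {p<..<q}" by (rule image_eqI[rotated]) (simp add: assms(1))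
    qed
  qed
qed

definition up_part :: "('a::linorder \<Rightarrow> 'a) \<Rightarrow> 'a \<Rightarrow> 'a" where
  "up_part g x = (if x < g x then g x else x)"

lemma up_part_ge: "x \<le> up_part g x"
  by (simp add: up_part_def less_imp_le)

lemma up_part_in_order_auts:
  assumes "g \<in> order_auts"
  shows "up_part g \<in> order_auts"
proof (rule order_autsI)
  show "strict_mono (up_part g)"
  proof (rule strict_monoI)
    fix x y :: 'a assume "x < y"
    then have "g x < g y" using assms by simp
    then show "up_part g x < up_part g y"
      using \<open>x < y\<close> by (auto simp: up_part_def intro: less_le_trans less_trans)
  qed
  show "surj (up_part g)"
  proof (rule surjI)
    fix y
    show "up_part g (if fun_inv g y < y then fun_inv g y else y) = y"
      using assms order_auts_less_iff[OF assms, of "fun_inv g y" y]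
      by (auto simp: up_part_def not_less)
  qed
qed

lemma up_part_in_fixing: "g \<in> fixing A \<Longrightarrow> up_part g \<in> fixing A"
  by (simp add: up_part_in_order_auts) (simp add: up_part_def)

text \<open>Hence \<open>g = up_part g \<circ> (up_part g\<inverse>)\<inverse>\<close> splits \<open>g\<close> into upward moving factors.\<close>

lemma up_part_eq_comp_up_part_inv:
  assumes "g \<in> order_auts"
  shows "up_part g = g \<circ> up_part (fun_inv g)"
proof
  fix x
  have "x < fun_inv g x \<longleftrightarrow> g x < x"
    using assms order_auts_less_iff[OF assms, of x "fun_inv g x"] by simp
  then show "up_part g x = (g \<circ> up_part (fun_inv g)) x"
    using assms by (auto simp: up_part_def)
qed

lemma int_bracket_ex:
  fixes q :: "int \<Rightarrow> 'b::linorder"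
  assumes "q k1 \<le> x" "x < q k2" "k1 \<le> k2"
  shows "\<exists>j. q j \<le> x \<and> x < q (j + 1)"
proof -
  have "q k \<le> x \<Longrightarrow> x < q (k + int d) \<Longrightarrow> \<exists>j. q j \<le> x \<and> x < q (j + 1)" for k d
  proof (induction d arbitrary: k)
    case 0
    then show ?case by simp
  next
    case (Suc d)
    show ?case
    proof (cases "x < q (k + 1)")
      case True
      then show ?thesis using Suc.prems by blast
    next
      case False
      then show ?thesis using Suc.IH[of "k + 1"] Suc.prems by (simp add: add.assoc)
    qed
  qed
  from this[of k1 "nat (k2 - k1)"] show ?thesis using assms by simp
qed

subsection \<open>Normal subgroups between two pointwise stabilisers\<close>

locale intermediate_normal_subgroup =
  fixes a b :: "'a::linorder set" and N :: "('a \<Rightarrow> 'a) set"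
  assumes ultrahomogeneous: "ultrahomogeneous TYPE('a)"
    and nontrivial: "\<exists>x y::'a. x \<noteq> y"
    and b_nowhere_dense: "interval_nowhere_dense b"
    and normal_N: "normal N (order_aut_group\<lparr>carrier := fixing a\<rparr>)"
    and fixing_b_subset_N: "fixing b \<subseteq> N"
begin

lemma dense: "x < y \<Longrightarrow> \<exists>z. x < z \<and> z < (y::'a)"
  using ultrahomogeneous_dense[OF ultrahomogeneous nontrivial] .

lemma subgroup_N: "subgroup N (order_aut_group\<lparr>carrier := fixing a\<rparr>)"
  using normal_N by (rule normal_imp_subgroup)

lemma N_subset_fixing: "N \<subseteq> fixing a"
  using subgroup.subset[OF subgroup_N] by simp

lemma m_inv_fixing: "f \<in> fixing a \<Longrightarrow> inv\<^bsub>order_aut_group\<lparr>carrier := fixing a\<rparr>\<^esub> f = fun_inv f"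
  using group.m_inv_consistent[OF group_order_aut_group subgroup_fixing, of f a] by simp

lemma comp_mem_N: "f \<in> N \<Longrightarrow> g \<in> N \<Longrightarrow> f \<circ> g \<in> N"
  using subgroup.m_closed[OF subgroup_N, of f g] by simp

lemma inv_mem_N: "f \<in> N \<Longrightarrow> fun_inv f \<in> N"
  using subgroup.m_inv_closed[OF subgroup_N, of f] m_inv_fixing N_subset_fixing by auto

lemma conj_mem_N: "k \<in> fixing a \<Longrightarrow> q \<in> N \<Longrightarrow> k \<circ> q \<circ> fun_inv k \<in> N"
  using normal.inv_op_closed2[OF normal_N, of k q] m_inv_fixing by simp

lemma mem_N_if_conj_fixes_b:
  assumes k: "k \<in> fixing a" and f: "f \<in> fixing a" and fixes_kb: "\<forall>y\<in>b. f (k y) = k y"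
  shows "f \<in> N"
proof -
  have k_aut: "k \<in> order_auts" using k by simp
  define q where "q = fun_inv k \<circ> f \<circ> k"
  have "q \<in> fixing b"
    using k_aut f fixes_kb by (simp add: q_def comp_in_order_auts inv_in_order_auts)
  then have "k \<circ> q \<circ> fun_inv k \<in> N" using fixing_b_subset_N conj_mem_N[OF k] by blast
  moreover have "k \<circ> q \<circ> fun_inv k = f" using k_aut by (simp add: q_def fun_eq_iff)
  ultimately show ?thesis by simp
qed

lemma push_b_out_of_interval:
  assumes "m < c" "c < d" "d < (m'::'a)"
  shows "\<exists>\<phi>\<in>order_auts. \<phi> m = m \<and> \<phi> m' = m' \<and> (\<forall>x\<in>b. \<phi> x \<notin> {c<..<d})"
proof -
  have "m < m'" using assms by simp
  then obtain u v where uv: "m \<le> u" "u < v" "v \<le> m'" "{u<..<v} \<inter> b = {}"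
    using interval_nowhere_denseD[OF b_nowhere_dense] by blast
  obtain u' where u': "u < u'" "u' < v" using dense[OF uv(2)] by blast
  obtain v' where v': "u' < v'" "v' < v" using dense[OF u'(2)] by blast
  have "m < u'" "v' < m'" using uv u' v' by auto
  then obtain \<phi> where \<phi>: "\<phi> \<in> order_auts" "\<phi> m = m" "\<phi> u' = c" "\<phi> v' = d" "\<phi> m' = m'"
    using ultrahomogeneous_quadruple[OF ultrahomogeneous _ \<open>u' < v'\<close> _ assms] by blast
  have "\<phi> x \<notin> {c<..<d}" if "x \<in> b" for x
  proof
    assume "\<phi> x \<in> {c<..<d}"
    then have "x \<in> {u'<..<v'}" using \<phi> by (metis greaterThanLessThan_iff order_auts_less_iff)
    then have "x \<in> {u<..<v}" using u' v' by auto
    then show False using that uv(4) by blast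
  qed
  then show ?thesis using \<phi> by blast
qed

lemma push_b_out_of_cells:
  fixes m c d m' :: "'i \<Rightarrow> 'a"
  assumes cell: "\<And>i. i \<in> I \<Longrightarrow> m i < c i \<and> c i < d i \<and> d i < m' i"
    and disj: "\<And>i j. i \<in> I \<Longrightarrow> j \<in> I \<Longrightarrow> i \<noteq> j \<Longrightarrow> {m i<..<m' i} \<inter> {m j<..<m' j} = {}"
    and avoid_a: "\<And>i. i \<in> I \<Longrightarrow> {m i<..<m' i} \<inter> a = {}"
  shows "\<exists>k\<in>fixing a. \<forall>y\<in>b. \<forall>i\<in>I. k y \<notin> {c i<..<d i}"
proof -
  have "\<forall>i\<in>I. \<exists>\<phi>\<in>order_auts. \<phi> (m i) = m i \<and> \<phi> (m' i) = m' i \<and> (\<forall>x\<in>b. \<phi> x \<notin> {c i<..<d i})"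
    using push_b_out_of_interval cell by blast
  then obtain \<Phi> where \<Phi>: "\<And>i. i \<in> I \<Longrightarrow> \<Phi> i \<in> order_auts \<and> \<Phi> i (m i) = m i \<and>
      \<Phi> i (m' i) = m' i \<and> (\<forall>x\<in>b. \<Phi> i x \<notin> {c i<..<d i})"
    by metis
  define C where "C i = {m i<..<m' i}" for i
  define k where "k = patch I C \<Phi>"
  have disjC: "\<And>i j. i \<in> I \<Longrightarrow> j \<in> I \<Longrightarrow> i \<noteq> j \<Longrightarrow> C i \<inter> C j = {}"
    using disj by (simp add: C_def)
  have \<Phi>_C: "\<Phi> i ` C i = C i" "strict_mono_on (C i) (\<Phi> i)" if "i \<in> I" for i
    using order_auts_fixing_endpoints[of "\<Phi> i" "m i" "m' i"] \<Phi>[OF that] by (simp_all add: C_def)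
  have "k \<in> order_auts"
    unfolding k_def
  proof (rule patch_in_order_auts[OF disjC])
    fix i assume "i \<in> I"
    show "order_convex (C i)" by (simp add: C_def order_convex_greaterThanLessThan)
    show "\<Phi> i ` C i = C i" "strict_mono_on (C i) (\<Phi> i)" using \<Phi>_C[OF \<open>i \<in> I\<close>] by simp_all
  qed
  moreover have "k x = x" if "x \<in> a" for x
    unfolding k_def by (rule patch_outside) (use avoid_a that in \<open>fastforce simp: C_def\<close>)
  moreover have "k y \<notin> {c i<..<d i}" if "y \<in> b" "i \<in> I" for y i
  proof (cases "\<exists>j\<in>I. y \<in> C j")
    case True
    then obtain j where "j \<in> I" "y \<in> C j" by blast
    then have "k y = \<Phi> j y" unfolding k_def by (intro patch_eq[where I=I and C=C, OF disjC])
    moreover have "\<Phi> j y \<in> C j" using \<Phi>_C[OF \<open>j \<in> I\<close>] \<open>y \<in> C j\<close> by (metis imageI)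
    moreover have "{c i<..<d i} \<subseteq> C i" using cell[OF \<open>i \<in> I\<close>] by (auto simp: C_def)
    ultimately show ?thesis
      using \<Phi>[OF \<open>j \<in> I\<close>] \<open>y \<in> b\<close> disjC[OF \<open>i \<in> I\<close> \<open>j \<in> I\<close>] by (cases "i = j") auto
  next
    case False
    then have "k y = y" unfolding k_def by (intro patch_outside) blast
    moreover have "{c i<..<d i} \<subseteq> C i" using cell[OF \<open>i \<in> I\<close>] by (auto simp: C_def)
    ultimately show ?thesis using False \<open>i \<in> I\<close> by auto
  qed
  ultimately show ?thesis by blast
qed

lemma mem_N_if_supported_in_cells:
  fixes m c d m' :: "'i \<Rightarrow> 'a"
  assumes "f \<in> fixing a"
    and "\<And>i. i \<in> I \<Longrightarrow> m i < c i \<and> c i < d i \<and> d i < m' i"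
    and "\<And>i j. i \<in> I \<Longrightarrow> j \<in> I \<Longrightarrow> i \<noteq> j \<Longrightarrow> {m i<..<m' i} \<inter> {m j<..<m' j} = {}"
    and "\<And>i. i \<in> I \<Longrightarrow> {m i<..<m' i} \<inter> a = {}"
    and support: "\<And>x. (\<forall>i\<in>I. x \<notin> {c i<..<d i}) \<Longrightarrow> f x = x"
  shows "f \<in> N"
proof -
  obtain k where "k \<in> fixing a" and "\<forall>y\<in>b. \<forall>i\<in>I. k y \<notin> {c i<..<d i}"
    using push_b_out_of_cells[of I m c d m'] assms(2-4) by blast
  then show ?thesis using mem_N_if_conj_fixes_b[OF _ assms(1)] support by blast
qed

end

subsection \<open>Upward moving elements of the stabiliser\<close>

locale upward_automorphism = intermediate_normal_subgroup +
  fixes g :: "'a::linorder \<Rightarrow> 'a"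
  assumes g_fixing: "g \<in> fixing a" and g_upward: "\<And>x. x \<le> g x"
begin

lemma g_in_order_auts: "g \<in> order_auts"
  using g_fixing by simp

definition gpow :: "int \<Rightarrow> 'a \<Rightarrow> 'a" where
  "gpow n = g [^]\<^bsub>order_aut_group\<^esub> n"

lemma gpow_in_order_auts [simp]: "gpow n \<in> order_auts"
  unfolding gpow_def using group.int_pow_closed[OF group_order_aut_group, of g n] g_in_order_auts
  by simp

lemma gpow_add: "gpow (m + n) x = gpow m (gpow n x)"
  unfolding gpow_def using group.int_pow_mult[OF group_order_aut_group, of g m n] g_in_order_auts
  by simp

lemma gpow_0 [simp]: "gpow 0 x = x"
  by (simp add: gpow_def)

lemma gpow_1 [simp]: "gpow 1 x = g x"
  unfolding gpow_def using group.int_pow_1[OF group_order_aut_group, of g] g_in_order_auts by simp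

lemma gpow_neg_cancel [simp]: "gpow (-n) (gpow n x) = x" "gpow n (gpow (-n) x) = x"
  using gpow_add[of "-n" n x] gpow_add[of n "-n" x] by simp_all

lemma gpow_succ: "gpow (n + 1) x = gpow n (g x)"
  using gpow_add[of n 1 x] by simp

lemma gpow_succ': "gpow (n + 1) x = g (gpow n x)"
  using gpow_add[of 1 n x] by (simp add: add.commute)

lemma gpow_2: "gpow 2 x = g (g x)"
  using gpow_succ'[of 1 x] by simp

lemma gpow_fixed: "g y = y \<Longrightarrow> gpow n y = y"
proof (induction n rule: int_induct[where k = 0])
  case (step2 i)
  then show ?case using gpow_succ[of "i - 1" y] by simp
qed (simp_all add: gpow_succ)

lemma gpow_nonneg_ge: "0 \<le> n \<Longrightarrow> y \<le> gpow n y"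
proof (induction n arbitrary: y rule: int_ge_induct)
  case (step i)
  then show ?case using g_upward[of y] gpow_succ[of i y] order_trans by metis
qed simp

lemma gpow_mono: "m \<le> n \<Longrightarrow> gpow m y \<le> gpow n y"
  using gpow_nonneg_ge[of "n - m" y] gpow_add[of m "n - m" y] by simp

lemma gpow_strict_mono:
  assumes "y < g y" "m < n"
  shows "gpow m y < gpow n y"
proof -
  have "g y \<le> gpow (n - m - 1) (g y)" using gpow_nonneg_ge assms(2) by simp
  then have "y < gpow (n - m) y" using gpow_succ[of "n - m - 1" y] assms(1) by simp
  then show ?thesis using gpow_add[of m "n - m" y] by simp
qed

lemma gpow_le_iff_le_gpow_neg: "gpow m x \<le> y \<longleftrightarrow> x \<le> gpow (-m) y"
  using order_auts_le_iff[OF gpow_in_order_auts, of "-m" "gpow m x" y] by simp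

lemma le_gpow_iff_gpow_neg_le: "y \<le> gpow m x \<longleftrightarrow> gpow (-m) y \<le> x"
  using order_auts_le_iff[OF gpow_in_order_auts, of "-m" y "gpow m x"] by simp

text \<open>On the points moved by \<open>g\<close>, the classes are the convex hulls of the \<open>g\<close>-orbits.\<close>

definition orbit_related :: "'a \<Rightarrow> 'a \<Rightarrow> bool" where
  "orbit_related x y \<longleftrightarrow> (\<exists>m n. gpow m x \<le> y \<and> y \<le> gpow n x)"

lemma orbit_relatedI: "gpow m x \<le> y \<Longrightarrow> y \<le> gpow n x \<Longrightarrow> orbit_related x y"
  unfolding orbit_related_def by blast

lemma orbit_related_refl: "orbit_related x x"
  using orbit_relatedI[of 0 x x 0] by simp

lemma orbit_related_sym: "orbit_related x y \<Longrightarrow> orbit_related y x"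
  unfolding orbit_related_def using gpow_le_iff_le_gpow_neg le_gpow_iff_gpow_neg_le by blast

lemma orbit_related_trans:
  assumes "orbit_related x y" "orbit_related y z"
  shows "orbit_related x z"
proof -
  obtain m n where xy: "gpow m x \<le> y" "y \<le> gpow n x"
    using assms(1) orbit_related_def by blast
  obtain m' n' where yz: "gpow m' y \<le> z" "z \<le> gpow n' y"
    using assms(2) orbit_related_def by blast
  have "gpow (m' + m) x \<le> z"
    using xy yz gpow_add[of m' m x] order_auts_le_iff[OF gpow_in_order_auts, of m'] order_trans
    by metis
  moreover have "z \<le> gpow (n' + n) x"
    using xy yz gpow_add[of n' n x] order_auts_le_iff[OF gpow_in_order_auts, of n'] order_trans
    by metis
  ultimately show ?thesis by (rule orbit_relatedI)
qed

definition moved :: "'a set" where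
  "moved = {x. x < g x}"

lemma moved_disjoint_a: "moved \<inter> a = {}"
  using g_fixing by (auto simp: moved_def)

lemma orbit_related_moved:
  assumes "x \<in> moved" "orbit_related x y"
  shows "y \<in> moved"
proof (rule ccontr)
  assume "y \<notin> moved"
  then have gy: "g y = y" using g_upward[of y] by (simp add: moved_def)
  obtain m n where "gpow m x \<le> y" "y \<le> gpow n x"
    using assms(2) orbit_related_def by blast
  then have "x = y"
    using gpow_le_iff_le_gpow_neg le_gpow_iff_gpow_neg_le gpow_fixed[OF gy] by (metis order_antisym)
  then show False using assms(1) gy by (simp add: moved_def)
qed

definition orbit_rep :: "'a \<Rightarrow> 'a" where
  "orbit_rep x = (SOME z. orbit_related x z)"

definition orbit_reps :: "'a set" where
  "orbit_reps = orbit_rep ` moved"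

lemma orbit_related_rep: "orbit_related x (orbit_rep x)"
  unfolding orbit_rep_def using orbit_related_refl by (rule someI)

lemma orbit_rep_eq:
  assumes "orbit_related x y"
  shows "orbit_rep x = orbit_rep y"
proof -
  have "orbit_related x = orbit_related y"
    using assms orbit_related_trans orbit_related_sym by blast
  then show ?thesis by (simp add: orbit_rep_def)
qed

lemma orbit_reps_moved: "x0 \<in> orbit_reps \<Longrightarrow> x0 \<in> moved"
  unfolding orbit_reps_def using orbit_related_moved orbit_related_rep by blast

lemma orbit_reps_unique:
  assumes "x0 \<in> orbit_reps" "x1 \<in> orbit_reps" "orbit_related x0 y" "orbit_related x1 y"
  shows "x0 = x1"
proof -
  have "orbit_rep x = x" if "x \<in> orbit_reps" for x
    using that orbit_rep_eq[OF orbit_related_rep] unfolding orbit_reps_def by auto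
  then show ?thesis using assms orbit_rep_eq by metis
qed

text \<open>\<open>g_local x0\<close> will agree with \<open>g\<close> on \<open>[agree_lo x0, agree_hi x0]\<close> and be supported in
  \<open>(cut_lo x0, cut_hi x0)\<close>; \<open>mid x0\<close> delimits the odd blocks.\<close>

definition is_window :: "'a \<Rightarrow> 'a \<times> 'a \<times> 'a \<times> 'a \<times> 'a \<Rightarrow> bool" where
  "is_window x0 = (\<lambda>(s, e, u, e', t).
     x0 < s \<and> s < e \<and> e < u \<and> u < e' \<and> e' < g x0 \<and> g e' < t \<and> t < g (g x0))"

definition window :: "'a \<Rightarrow> 'a \<times> 'a \<times> 'a \<times> 'a \<times> 'a" where
  "window x0 = (SOME w. is_window x0 w)"

definition "cut_lo x0 = (case window x0 of (s, e, u, e', t) \<Rightarrow> s)"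
definition "agree_lo x0 = (case window x0 of (s, e, u, e', t) \<Rightarrow> e)"
definition "mid x0 = (case window x0 of (s, e, u, e', t) \<Rightarrow> u)"
definition "agree_hi x0 = (case window x0 of (s, e, u, e', t) \<Rightarrow> e')"
definition "cut_hi x0 = (case window x0 of (s, e, u, e', t) \<Rightarrow> t)"

lemma window_points:
  assumes "x0 \<in> moved"
  shows "x0 < cut_lo x0" "cut_lo x0 < agree_lo x0" "agree_lo x0 < mid x0"
    "mid x0 < agree_hi x0" "agree_hi x0 < g x0" "g (agree_hi x0) < cut_hi x0"
    "cut_hi x0 < g (g x0)"
proof -
  have "x0 < g x0" using assms by (simp add: moved_def)
  obtain s where s: "x0 < s" "s < g x0" using dense[OF \<open>x0 < g x0\<close>] by blast
  obtain e where e: "s < e" "e < g x0" using dense[OF s(2)] by blast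
  obtain u where u: "e < u" "u < g x0" using dense[OF e(2)] by blast
  obtain e' where e': "u < e'" "e' < g x0" using dense[OF u(2)] by blast
  have "g e' < g (g x0)" using e' g_in_order_auts by simp
  then obtain t where t: "g e' < t" "t < g (g x0)" using dense by blast
  have "is_window x0 (s, e, u, e', t)" unfolding is_window_def using s e u e' t by simp
  then have "is_window x0 (window x0)" unfolding window_def by (rule someI)
  then show "x0 < cut_lo x0" "cut_lo x0 < agree_lo x0" "agree_lo x0 < mid x0"
    "mid x0 < agree_hi x0" "agree_hi x0 < g x0" "g (agree_hi x0) < cut_hi x0"
    "cut_hi x0 < g (g x0)"
    unfolding is_window_def cut_lo_def agree_lo_def mid_def agree_hi_def cut_hi_def
    by (simp_all split: prod.splits)
qed

definition is_local_g :: "'a \<Rightarrow> ('a \<Rightarrow> 'a) \<Rightarrow> bool" where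
  "is_local_g x0 h \<longleftrightarrow> h \<in> order_auts \<and> (\<forall>z\<le>cut_lo x0. h z = z) \<and>
     (\<forall>z. agree_lo x0 \<le> z \<and> z \<le> agree_hi x0 \<longrightarrow> h z = g z) \<and> (\<forall>z\<ge>cut_hi x0. h z = z)"

definition g_local :: "'a \<Rightarrow> 'a \<Rightarrow> 'a" where
  "g_local x0 = (SOME h. is_local_g x0 h)"

lemma ex_is_local_g:
  assumes "x0 \<in> moved"
  shows "\<exists>h. is_local_g x0 h"
proof -
  note w = window_points[OF assms]
  define s e e' t where "s = cut_lo x0" "e = agree_lo x0" "e' = agree_hi x0" "t = cut_hi x0"
  have o1: "s < e" "e < e'" "e' < t"
    using w g_upward[of e'] unfolding s_e_e'_t_def by (auto intro: less_le_trans)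
  have o2: "s < g e" "g e < g e'" "g e' < t"
    using o1 g_upward[of e] w g_in_order_auts unfolding s_e_e'_t_def by (auto intro: less_le_trans)
  obtain \<phi> where \<phi>: "\<phi> \<in> order_auts" "\<phi> s = s" "\<phi> e = g e" "\<phi> e' = g e'" "\<phi> t = t"
    using ultrahomogeneous_quadruple[OF ultrahomogeneous o1 o2] by blast
  define h4 where "h4 = paste t \<phi> id"
  define h3 where "h3 = paste e' g h4"
  define h2 where "h2 = paste e \<phi> h3"
  define h1 where "h1 = paste s id h2"
  have "h4 \<in> order_auts"
    unfolding h4_def by (rule paste_in_order_auts) (simp_all add: \<phi> id_in_order_auts)
  then have "h3 \<in> order_auts"
    unfolding h3_def by (rule paste_in_order_auts[OF g_in_order_auts])
      (use o1 \<phi> in \<open>simp add: h4_def paste_def less_imp_le\<close>)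
  then have "h2 \<in> order_auts"
    unfolding h2_def by (rule paste_in_order_auts[OF \<phi>(1)])
      (use o1 \<phi> in \<open>simp add: h3_def paste_def less_imp_le\<close>)
  then have "h1 \<in> order_auts"
    unfolding h1_def by (rule paste_in_order_auts[OF id_in_order_auts])
      (use o1 \<phi> in \<open>simp add: h2_def paste_def less_imp_le\<close>)
  moreover have "h1 z = g z" if "e \<le> z" "z \<le> e'" for z
    using that o1 \<phi> by (auto simp: h1_def h2_def h3_def paste_def)
  moreover have "h1 z = z" if "t \<le> z" for z
    using that o1 \<phi> by (auto simp: h1_def h2_def h3_def h4_def paste_def)
  moreover have "h1 z = z" if "z \<le> s" for z
    using that by (simp add: h1_def paste_def)
  ultimately have "is_local_g x0 h1"
    unfolding is_local_g_def s_e_e'_t_def[symmetric] by blast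
  then show ?thesis by blast
qed

lemma g_local_spec:
  assumes "x0 \<in> moved"
  shows "g_local x0 \<in> order_auts" "z \<le> cut_lo x0 \<Longrightarrow> g_local x0 z = z"
    "agree_lo x0 \<le> z \<Longrightarrow> z \<le> agree_hi x0 \<Longrightarrow> g_local x0 z = g z"
    "cut_hi x0 \<le> z \<Longrightarrow> g_local x0 z = z"
  using someI_ex[OF ex_is_local_g[OF assms]] by (simp_all add: g_local_def is_local_g_def)

abbreviation blocks :: "('a \<times> int) set" where
  "blocks \<equiv> orbit_reps \<times> UNIV"

definition block_lo :: "int \<Rightarrow> ('a \<Rightarrow> 'a) \<Rightarrow> 'a \<times> int \<Rightarrow> 'a" where
  "block_lo k y = (\<lambda>(x0, j). gpow (2 * j + k) (y x0))"

definition block_hi :: "int \<Rightarrow> ('a \<Rightarrow> 'a) \<Rightarrow> 'a \<times> int \<Rightarrow> 'a" where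
  "block_hi k y = (\<lambda>(x0, j). gpow (2 * j + k + 2) (y x0))"

lemma block_lo_simp [simp]: "block_lo k y (x0, j) = gpow (2 * j + k) (y x0)"
  by (simp add: block_lo_def)

lemma block_hi_simp [simp]: "block_hi k y (x0, j) = gpow (2 * j + k + 2) (y x0)"
  by (simp add: block_hi_def)

lemma block_related:
  assumes "orbit_related x0 (y x0)" "z \<in> {block_lo k y (x0, j)<..<block_hi k y (x0, j)}"
  shows "orbit_related x0 z"
proof -
  have "orbit_related (y x0) z"
    using assms(2) by (intro orbit_relatedI[of "2 * j + k" _ _ "2 * j + k + 2"]) auto
  then show ?thesis using assms(1) orbit_related_trans by blast
qed

lemma blocks_disjoint:
  assumes related: "\<And>x0. x0 \<in> orbit_reps \<Longrightarrow> orbit_related x0 (y x0)"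
    and "i \<in> blocks" "i' \<in> blocks" "i \<noteq> i'"
  shows "{block_lo k y i<..<block_hi k y i} \<inter> {block_lo k y i'<..<block_hi k y i'} = {}"
proof (rule ccontr)
  obtain x0 j x1 j' where i: "i = (x0, j)" "i' = (x1, j')" and x: "x0 \<in> orbit_reps" "x1 \<in> orbit_reps"
    using assms(2,3) by auto
  assume "{block_lo k y i<..<block_hi k y i} \<inter> {block_lo k y i'<..<block_hi k y i'} \<noteq> {}"
  then obtain z where z: "z \<in> {block_lo k y (x0, j)<..<block_hi k y (x0, j)}"
    "z \<in> {block_lo k y (x1, j')<..<block_hi k y (x1, j')}"
    unfolding i by blast
  have "x0 = x1"
    using orbit_reps_unique[OF x] block_related[OF related z(1)] block_related[OF related z(2)] x
    by blast
  have separated: "block_hi k y (x0, l) \<le> block_lo k y (x0, l')" if "l < l'" for l l'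
    using that by (simp add: gpow_mono)
  have "j \<noteq> j'" using \<open>x0 = x1\<close> i assms(4) by simp
  then consider "j < j'" | "j' < j" by linarith
  then show False
    by cases (use z separated \<open>x0 = x1\<close> in \<open>fastforce+\<close>)
qed

lemma blocks_subset_moved:
  assumes related: "\<And>x0. x0 \<in> orbit_reps \<Longrightarrow> orbit_related x0 (y x0)" and "i \<in> blocks"
  shows "{block_lo k y i<..<block_hi k y i} \<subseteq> moved"
proof
  fix z assume z: "z \<in> {block_lo k y i<..<block_hi k y i}"
  obtain x0 j where i: "i = (x0, j)" and x0: "x0 \<in> orbit_reps" using assms(2) by auto
  have "orbit_related x0 z" using block_related[where y = y, OF related[OF x0]] z i by simp
  then show "z \<in> moved" using orbit_related_moved[OF orbit_reps_moved[OF x0]] by blast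
qed

lemma orbit_related_mid: "x0 \<in> moved \<Longrightarrow> orbit_related x0 (mid x0)"
  using window_points[of x0]
  by (intro orbit_relatedI[of 0 _ _ 1]) (auto dest: less_imp_le intro: order_trans)

text \<open>On the even blocks \<open>g_even\<close> is a conjugate of \<open>g_local x0\<close>, so it agrees with \<open>g\<close> on the
  even translates of \<open>[agree_lo x0, agree_hi x0]\<close>; the remaining part \<open>g_odd\<close> is then supported
  in the odd blocks.\<close>

definition g_even :: "'a \<Rightarrow> 'a" where
  "g_even = patch blocks (\<lambda>i. {block_lo 0 id i<..<block_hi 0 id i})
     (\<lambda>(x0, j). gpow (2 * j) \<circ> g_local x0 \<circ> gpow (- (2 * j)))"

definition g_odd :: "'a \<Rightarrow> 'a" where
  "g_odd = g \<circ> fun_inv g_even"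

lemma even_blocks_disjoint:
  "i \<in> blocks \<Longrightarrow> i' \<in> blocks \<Longrightarrow> i \<noteq> i' \<Longrightarrow>
     {block_lo 0 id i<..<block_hi 0 id i} \<inter> {block_lo 0 id i'<..<block_hi 0 id i'} = {}"
  by (rule blocks_disjoint) (simp_all add: orbit_related_refl)

lemma conj_g_local:
  fixes j :: int
  assumes "x0 \<in> orbit_reps"
  defines "F \<equiv> gpow (2 * j) \<circ> g_local x0 \<circ> gpow (- (2 * j))"
  shows "F \<in> order_auts" "F (gpow (2 * j) x0) = gpow (2 * j) x0"
    "F (gpow (2 * j + 2) x0) = gpow (2 * j + 2) x0"
proof -
  have x0: "x0 \<in> moved" using orbit_reps_moved[OF assms(1)] .
  note w = window_points[OF x0] and h = g_local_spec[OF x0]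
  show "F \<in> order_auts"
    unfolding F_def by (intro comp_in_order_auts gpow_in_order_auts h(1))
  show "F (gpow (2 * j) x0) = gpow (2 * j) x0"
    unfolding F_def using h(2)[of x0] w(1) by simp
  have "g_local x0 (g (g x0)) = g (g x0)" using h(4) w(7) by simp
  then show "F (gpow (2 * j + 2) x0) = gpow (2 * j + 2) x0"
    unfolding F_def using gpow_add[of "2 * j" 2 x0] gpow_2[of x0] by simp
qed

lemma g_even_in_order_auts: "g_even \<in> order_auts"
  unfolding g_even_def
proof (rule patch_in_order_auts[OF even_blocks_disjoint])
  fix i assume "i \<in> blocks"
  then obtain x0 j where i: "i = (x0, j)" "x0 \<in> orbit_reps" by auto
  show "order_convex {block_lo 0 id i<..<block_hi 0 id i}"
    by (rule order_convex_greaterThanLessThan)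
  show "(case i of (x0, j) \<Rightarrow> gpow (2 * j) \<circ> g_local x0 \<circ> gpow (- (2 * j))) `
      {block_lo 0 id i<..<block_hi 0 id i} = {block_lo 0 id i<..<block_hi 0 id i}"
    "strict_mono_on {block_lo 0 id i<..<block_hi 0 id i}
      (case i of (x0, j) \<Rightarrow> gpow (2 * j) \<circ> g_local x0 \<circ> gpow (- (2 * j)))"
    using order_auts_fixing_endpoints[OF conj_g_local[OF i(2)]] i(1) by (simp_all add: comp_def)
qed

lemma g_even_eq:
  assumes "x0 \<in> orbit_reps" "z \<in> {gpow (2 * j) x0<..<gpow (2 * j + 2) x0}"
  shows "g_even z = gpow (2 * j) (g_local x0 (gpow (- (2 * j)) z))"
proof -
  have "g_even z = (case (x0, j) of (x0, j) \<Rightarrow> gpow (2 * j) \<circ> g_local x0 \<circ> gpow (- (2 * j))) z"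
    unfolding g_even_def by (rule patch_eq[OF even_blocks_disjoint]) (use assms in auto)
  then show ?thesis by simp
qed

lemma g_even_outside: "z \<notin> moved \<Longrightarrow> g_even z = z"
  unfolding g_even_def
proof (rule patch_outside)
  fix i assume "z \<notin> moved" "i \<in> blocks"
  then show "z \<notin> {block_lo 0 id i<..<block_hi 0 id i}"
    using blocks_subset_moved[of id i 0] orbit_related_refl by auto
qed

lemma g_even_fixing: "g_even \<in> fixing a"
  using g_even_in_order_auts g_even_outside moved_disjoint_a by blast

lemma g_even_eq_g:
  assumes "x0 \<in> orbit_reps" "agree_lo x0 \<le> w" "w \<le> agree_hi x0"
  shows "g_even (gpow (2 * j) w) = g (gpow (2 * j) w)"
proof -
  have x0: "x0 \<in> moved" using orbit_reps_moved[OF assms(1)] .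
  note ww = window_points[OF x0]
  have "x0 < w" "w < g x0" using ww assms(2,3) by auto
  moreover have "g x0 \<le> g (g x0)" by (rule g_upward)
  ultimately have "gpow (2 * j) w \<in> {gpow (2 * j) x0<..<gpow (2 * j + 2) x0}"
    using gpow_add[of "2 * j" 2 x0] gpow_2[of x0] by simp
  from g_even_eq[OF assms(1) this]
  have "g_even (gpow (2 * j) w) = gpow (2 * j) (g w)" using g_local_spec(3)[OF x0 assms(2,3)] by simp
  then show ?thesis using gpow_succ[of "2 * j" w] gpow_succ'[of "2 * j" w] by simp
qed

lemma g_even_mem_N: "g_even \<in> N"
proof -
  have cells: "gpow (2 * j) x0 < gpow (2 * j) (cut_lo x0) \<and> gpow (2 * j) (cut_lo x0) < gpow (2 * j) (cut_hi x0)
      \<and> gpow (2 * j) (cut_hi x0) < gpow (2 * j + 2) x0" if "x0 \<in> orbit_reps" for x0 j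
  proof -
    note w = window_points[OF orbit_reps_moved[OF that]]
    have "cut_lo x0 < cut_hi x0" using w g_upward[of "agree_hi x0"] by (meson less_le_trans less_trans)
    then show ?thesis using w gpow_add[of "2 * j" 2 x0] gpow_2[of x0] by simp
  qed
  have support: "g_even x = x"
    if "\<And>x0 j. x0 \<in> orbit_reps \<Longrightarrow> x \<notin> {gpow (2 * j) (cut_lo x0)<..<gpow (2 * j) (cut_hi x0)}"
    for x
  proof (cases "\<exists>i\<in>blocks. x \<in> {block_lo 0 id i<..<block_hi 0 id i}")
    case True
    then obtain x0 j where x0: "x0 \<in> orbit_reps" and x: "x \<in> {gpow (2 * j) x0<..<gpow (2 * j + 2) x0}"
      by auto
    define z where "z = gpow (- (2 * j)) x"
    have "x = gpow (2 * j) z" by (simp add: z_def)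
    then have "z \<notin> {cut_lo x0<..<cut_hi x0}" using that[OF x0, of j] by simp
    then have "g_local x0 z = z" using g_local_spec(2,4)[OF orbit_reps_moved[OF x0]] by fastforce
    then show ?thesis using g_even_eq[OF x0 x] by (simp add: z_def)
  next
    case False
    then show ?thesis unfolding g_even_def by (intro patch_outside) blast
  qed
  show ?thesis
  proof (rule mem_N_if_supported_in_cells[OF g_even_fixing, where I = blocks
        and m = "block_lo 0 id" and c = "block_lo 0 cut_lo" and d = "block_lo 0 cut_hi"
        and m' = "block_hi 0 id"])
    fix i assume "i \<in> blocks"
    then show "block_lo 0 id i < block_lo 0 cut_lo i \<and> block_lo 0 cut_lo i < block_lo 0 cut_hi i \<and>
        block_lo 0 cut_hi i < block_hi 0 id i"
      using cells by auto
    show "{block_lo 0 id i<..<block_hi 0 id i} \<inter> a = {}"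
      using blocks_subset_moved[of id i 0] \<open>i \<in> blocks\<close> orbit_related_refl moved_disjoint_a
      by auto
  next
    fix i i' assume "i \<in> blocks" "i' \<in> blocks" "i \<noteq> i'"
    then show "{block_lo 0 id i<..<block_hi 0 id i} \<inter> {block_lo 0 id i'<..<block_hi 0 id i'} = {}"
      by (rule even_blocks_disjoint)
  next
    fix x assume outside: "\<forall>i\<in>blocks. x \<notin> {block_lo 0 cut_lo i<..<block_lo 0 cut_hi i}"
    show "g_even x = x"
      by (rule support) (use bspec[OF outside, of "(x0, j)" for x0 j] in simp)
  qed
qed

lemma g_odd_fixing: "g_odd \<in> fixing a"
  using comp_in_order_auts[OF g_in_order_auts inv_in_order_auts[OF g_even_in_order_auts]]
    inv_in_fixing[OF g_even_fixing] g_fixing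
  by (simp add: g_odd_def)

lemma moved_covered:
  assumes "x \<in> moved"
    and gaps: "\<And>j. x \<notin> {gpow (2 * j + 1) (agree_hi (orbit_rep x))<..<gpow (2 * j + 3) (agree_lo (orbit_rep x))}"
  shows "\<exists>j w. agree_lo (orbit_rep x) \<le> w \<and> w \<le> agree_hi (orbit_rep x) \<and> x = g (gpow (2 * j) w)"
proof -
  define x0 e e' where "x0 = orbit_rep x" "e = agree_lo x0" "e' = agree_hi x0"
  have x0: "x0 \<in> moved" using assms(1) orbit_reps_moved by (simp add: x0_e_e'_def orbit_reps_def)
  note w = window_points[OF x0]
  have "orbit_related x0 e"
    using w by (intro orbit_relatedI[of 0 _ _ 1]) (auto simp: x0_e_e'_def intro: less_imp_le)
  moreover have "orbit_related x0 x"
    using orbit_related_rep orbit_related_sym by (simp add: x0_e_e'_def)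
  ultimately have "orbit_related e x" using orbit_related_sym orbit_related_trans by blast
  then obtain m n where mn: "gpow m e \<le> x" "x \<le> gpow n e" unfolding orbit_related_def by blast
  have "e \<in> moved" using orbit_related_moved[OF x0 \<open>orbit_related x0 e\<close>] .
  then have "e < g e" by (simp add: moved_def)
  have "gpow (2 * (- \<bar>m\<bar> - 1) + 1) e \<le> gpow m e" by (rule gpow_mono) simp
  then have "gpow (2 * (- \<bar>m\<bar> - 1) + 1) e \<le> x" using mn(1) by simp
  moreover have "gpow n e < gpow (2 * \<bar>n\<bar> + 1) e" by (rule gpow_strict_mono[OF \<open>e < g e\<close>]) simp
  then have "x < gpow (2 * \<bar>n\<bar> + 1) e" using mn(2) by (rule le_less_trans[rotated])
  moreover have "- \<bar>m\<bar> - 1 \<le> \<bar>n\<bar>" using abs_ge_zero[of m] abs_ge_zero[of n] by linarith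
  ultimately obtain j where j: "gpow (2 * j + 1) e \<le> x" "x < gpow (2 * (j + 1) + 1) e"
    using int_bracket_ex[of "\<lambda>k. gpow (2 * k + 1) e" "- \<bar>m\<bar> - 1" x "\<bar>n\<bar>"] by blast
  have "x < gpow (2 * j + 3) e" using j(2) by (simp add: algebra_simps)
  then have "x \<le> gpow (2 * j + 1) e'"
    using gaps[of j] by (auto simp: x0_e_e'_def not_less)
  define w where "w = gpow (- (2 * j + 1)) x"
  have x_eq: "x = gpow (2 * j + 1) w" by (simp only: w_def gpow_neg_cancel)
  have "e \<le> w" "w \<le> e'" using j(1) \<open>x \<le> gpow (2 * j + 1) e'\<close> unfolding x_eq by simp_all
  moreover have "x = g (gpow (2 * j) w)" using x_eq gpow_succ' by simp
  ultimately show ?thesis unfolding x0_e_e'_def by blast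
qed

lemma g_odd_mem_N: "g_odd \<in> N"
proof -
  have cells: "gpow (2 * j + 1) (mid x0) < gpow (2 * j + 1) (agree_hi x0) \<and>
      gpow (2 * j + 1) (agree_hi x0) < gpow (2 * j + 3) (agree_lo x0) \<and>
      gpow (2 * j + 3) (agree_lo x0) < gpow (2 * j + 3) (mid x0)" if "x0 \<in> orbit_reps" for x0 j
  proof -
    note w = window_points[OF orbit_reps_moved[OF that]]
    have "g x0 < g (agree_lo x0)" using w g_in_order_auts by simp
    also have "\<dots> \<le> g (g (agree_lo x0))" by (rule g_upward)
    finally have "agree_hi x0 < gpow 2 (agree_lo x0)" using w gpow_2 by simp
    moreover have "gpow (2 * j + 3) y = gpow (2 * j + 1) (gpow 2 y)" for y
      using gpow_add[of "2 * j + 1" 2 y] by (simp add: add.assoc)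
    ultimately show ?thesis using w by simp
  qed
  have support: "g_odd x = x"
    if outside: "\<And>x0 j. x0 \<in> orbit_reps \<Longrightarrow>
        x \<notin> {gpow (2 * j + 1) (agree_hi x0)<..<gpow (2 * j + 3) (agree_lo x0)}"
    for x
  proof (cases "x \<in> moved")
    case False
    then have "g x = x" "g_even x = x"
      using g_upward[of x] g_even_outside by (auto simp: moved_def)
    then show ?thesis
      using order_auts_inv_apply[OF g_even_in_order_auts, of x] by (simp add: g_odd_def)
  next
    case True
    then have "orbit_rep x \<in> orbit_reps" by (simp add: orbit_reps_def)
    then obtain j w where w: "agree_lo (orbit_rep x) \<le> w" "w \<le> agree_hi (orbit_rep x)"
      and x: "x = g (gpow (2 * j) w)"
      using moved_covered[OF True outside[OF \<open>orbit_rep x \<in> orbit_reps\<close>]] by blast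
    then have "g_even (gpow (2 * j) w) = x"
      using g_even_eq_g[OF \<open>orbit_rep x \<in> orbit_reps\<close> w] by simp
    moreover have "fun_inv g_even (g_even (gpow (2 * j) w)) = gpow (2 * j) w"
      by (rule order_auts_inv_apply[OF g_even_in_order_auts])
    ultimately have "fun_inv g_even x = gpow (2 * j) w" by simp
    then show ?thesis using x by (simp add: g_odd_def)
  qed
  show ?thesis
  proof (rule mem_N_if_supported_in_cells[OF g_odd_fixing, where I = blocks
        and m = "block_lo 1 mid" and c = "block_lo 1 agree_hi" and d = "block_hi 1 agree_lo"
        and m' = "block_hi 1 mid"])
    fix i assume "i \<in> blocks"
    then show "block_lo 1 mid i < block_lo 1 agree_hi i \<and> block_lo 1 agree_hi i < block_hi 1 agree_lo i \<and>
        block_hi 1 agree_lo i < block_hi 1 mid i"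
      using cells by (auto simp: add.assoc)
    have "{block_lo 1 mid i<..<block_hi 1 mid i} \<subseteq> moved"
      using blocks_subset_moved[where y = mid and k = 1, OF orbit_related_mid[OF orbit_reps_moved]
          \<open>i \<in> blocks\<close>] .
    then show "{block_lo 1 mid i<..<block_hi 1 mid i} \<inter> a = {}" using moved_disjoint_a by blast
  next
    fix i i' assume "i \<in> blocks" "i' \<in> blocks" "i \<noteq> i'"
    then show "{block_lo 1 mid i<..<block_hi 1 mid i} \<inter> {block_lo 1 mid i'<..<block_hi 1 mid i'} = {}"
      by (intro blocks_disjoint) (simp_all add: orbit_related_mid orbit_reps_moved)
  next
    fix x assume outside: "\<forall>i\<in>blocks. x \<notin> {block_lo 1 agree_hi i<..<block_hi 1 agree_lo i}"
    show "g_odd x = x"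
      by (rule support) (use bspec[OF outside, of "(x0, j)" for x0 j] in \<open>simp add: add.assoc\<close>)
  qed
qed

lemma g_mem_N: "g \<in> N"
proof -
  have "g_odd \<circ> g_even = g"
    using g_even_in_order_auts by (simp add: g_odd_def fun_eq_iff)
  then show ?thesis using comp_mem_N[OF g_odd_mem_N g_even_mem_N] by simp
qed

end

context intermediate_normal_subgroup
begin

lemma upward_mem_N: "g \<in> fixing a \<Longrightarrow> (\<And>x. x \<le> g x) \<Longrightarrow> g \<in> N"
  by (rule upward_automorphism.g_mem_N, unfold_locales)

lemma fixing_subset_N: "fixing a \<subseteq> N"
proof
  fix g assume g: "g \<in> fixing a"
  define u where "u = up_part (fun_inv g)"
  have "up_part g \<in> N" using upward_mem_N up_part_in_fixing[OF g] up_part_ge by blast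
  moreover have "u \<in> N"
    unfolding u_def using upward_mem_N up_part_in_fixing[OF inv_in_fixing[OF g]] up_part_ge by blast
  then have "fun_inv u \<in> N" by (rule inv_mem_N)
  ultimately have "up_part g \<circ> fun_inv u \<in> N" by (rule comp_mem_N)
  moreover have "u \<in> order_auts"
    using up_part_in_fixing[OF inv_in_fixing[OF g]] by (simp add: u_def)
  then have "up_part g \<circ> fun_inv u = g"
    using up_part_eq_comp_up_part_inv[of g] g by (simp add: u_def fun_eq_iff)
  ultimately show "g \<in> N" by simp
qed

lemma N_eq_fixing: "N = fixing a"
  using fixing_subset_N N_subset_fixing by blast

end

lemma ultrahomogeneous_nowhere_dense_iff:
  fixes A :: "'a::linorder_topology set"
  assumes "ultrahomogeneous TYPE('a)" "\<exists>x y :: 'a. x \<noteq> y"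
  shows "nowhere_dense A \<longleftrightarrow> interval_nowhere_dense A"
  using interval_nowhere_dense_if_nowhere_dense nowhere_dense_if_interval_nowhere_dense
    ultrahomogeneous_dense[OF assms] ultrahomogeneous_gt_ex[OF assms] ultrahomogeneous_lt_ex[OF assms]
  by metis

theorem mainTheorem15:
  assumes "ultrahomogeneous TYPE('a::linorder_topology)"
    and "\<exists>x y :: 'a. x \<noteq> y"
  shows "simple_dynamical_ideal (order_aut_group :: ('a \<Rightarrow> 'a) monoid) UNIV
           (\<lambda>f x. f x) {A :: 'a set. nowhere_dense A}"
proof -
  have ideal_eq: "{A :: 'a set. nowhere_dense A} = {A. interval_nowhere_dense A}"
    using ultrahomogeneous_nowhere_dense_iff[OF assms] by blast
  show ?thesis
    unfolding simple_dynamical_ideal_def ideal_eq pstab_order_aut_group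
  proof (intro conjI allI impI dynamical_ideal_interval_nowhere_dense)
    fix a b :: "'a set" and N
    assume "a \<in> {A. interval_nowhere_dense A} \<and> b \<in> {A. interval_nowhere_dense A} \<and> a \<subseteq> b"
      and "normal N (order_aut_group\<lparr>carrier := fixing a\<rparr>) \<and> fixing b \<subseteq> N"
    then interpret intermediate_normal_subgroup a b N
      using assms by (simp add: intermediate_normal_subgroup_def)
    show "N = fixing a" by (rule N_eq_fixing)
  qed
qed

end
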